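(* Let $m\ge1$ and let $\Gamma_C$ be a gate with dangling edges $x_1,\dots,x_m,y_1,\dots,y_m$ consisting of $m$ "lines", where line $\ell$ runs from dangling edge $x_\ell$ to dangling edge $y_\ell$, every two lines cross exactly once, each crossing is a vertex with signature $\mathtt{PASS}$ at which one line uses the north/south edges and the other the west/east edges, and all edge weights are $1$. Then $\mathrm{Sig}(\Gamma_C)(x,y)=C(x,y):=(-1)^{\binom{\mathrm{hw}(x)}{2}}[y=x]$, and the cross cap function $O(x,y):=[y=x]$ satisfies $$O(x,y)=\tfrac{1-\mathrm{i}}{2}\,\mathrm{i}^{\mathrm{hw}(x)}C(x,y)+\tfrac{1+\mathrm{i}}{2}\,(-\mathrm{i})^{\mathrm{hw}(x)}C(x,y)\quad\text{for all }x,y\in\{0,1\}^m,$$ where $\mathrm{i}$ is the imaginary unit.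
   Context: $\mathtt{PASS}(1111)=-1$, $\mathtt{PASS}(0000)=\mathtt{PASS}(0101)=\mathtt{PASS}(1010)=1$, $\mathtt{PASS}=0$ otherwise (bits ordered north, east, south, west). $\mathrm{hw}(x)$ is the Hamming weight. $[\varphi]$ is the Iverson bracket. The signature of a gate $\Gamma$ with dangling edges $D$ is $\mathrm{Sig}(\Gamma,x)=\sum_{y\in\{0,1\}^{E(\Gamma)\setminus D}}w_\Gamma(xy)\prod_v f_v((xy)|_{I(v)})$. *)

theory Defs
  imports Complex_Main
begin

text \<open>Each vertex v carries an
  ordered list of incident edges (for degree-4 vertices: north, east, south, west)
  and a local function f_v; each edge e carries a weight function w_e, and the weight
  of a full assignment is the product of the edge weights.\<close>

record ('v, 'e) gate =
  gV   :: "'v set"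
  gE   :: "'e set"
  ginc :: "'v \<Rightarrow> 'e list"
  gf   :: "'v \<Rightarrow> bool list \<Rightarrow> complex"
  gw   :: "'e \<Rightarrow> bool \<Rightarrow> complex"

text \<open>Signature of a gate with (ordered) dangling edges ds, evaluated at the boundary
  values vs: sum over all assignments of the non-dangling edges (assignments are
  normalised to False outside the edge set).\<close>

definition Sig :: "('v, 'e) gate \<Rightarrow> 'e list \<Rightarrow> bool list \<Rightarrow> complex" where
  "Sig G ds vs =
     (\<Sum>z \<in> {z. (\<forall>i<length ds. z (ds ! i) = vs ! i) \<and> (\<forall>e. e \<notin> gE G \<longrightarrow> z e = False)}.
        (\<Prod>e\<in>gE G. gw G e (z e)) * (\<Prod>v\<in>gV G. gf G v (map z (ginc G v))))"

text \<open>PASS, bits ordered north, east, south, west.\<close>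

definition PASS :: "bool list \<Rightarrow> complex" where
  "PASS bs = (if bs = [True, True, True, True] then -1
              else if bs = [False, False, False, False] \<or> bs = [False, True, False, True]
                      \<or> bs = [True, False, True, False] then 1 else 0)"

definition hw :: "bool list \<Rightarrow> nat" where
  "hw x = length (filter id x)"

definition Cfun :: "bool list \<Rightarrow> bool list \<Rightarrow> complex" where
  "Cfun x y = (-1) ^ (hw x choose 2) * (if y = x then 1 else 0)"

definition Ofun :: "bool list \<Rightarrow> bool list \<Rightarrow> complex" where
  "Ofun x y = (if y = x then 1 else 0)"

text \<open>G is a "crossing gate" of m lines: line l consists of the edges
  seg l 0, ..., seg l (k l) (in order), with x-dangling edge seg l 0 and y-dangling
  edge seg l (k l); consecutive edges seg l j, seg l (j+1) meet at the vertex cv l j.\<close>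

definition crossing_gate ::
  "('v, 'e) gate \<Rightarrow> nat \<Rightarrow> (nat \<Rightarrow> 'e) \<Rightarrow> (nat \<Rightarrow> 'e) \<Rightarrow> bool" where
  "crossing_gate G m xe ye \<longleftrightarrow>
    finite (gV G) \<and> finite (gE G) \<and>
    (\<exists>(seg :: nat \<Rightarrow> nat \<Rightarrow> 'e) (k :: nat \<Rightarrow> nat) (cv :: nat \<Rightarrow> nat \<Rightarrow> 'v).
       (\<forall>l<m. xe l = seg l 0 \<and> ye l = seg l (k l)) \<and>
       gE G = {seg l j | l j. l < m \<and> j \<le> k l} \<and>
       (\<forall>l j l' j'. l < m \<and> j \<le> k l \<and> l' < m \<and> j' \<le> k l' \<and> seg l j = seg l' j'
            \<longrightarrow> l = l' \<and> j = j') \<and>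
       gV G = {cv l j | l j. l < m \<and> j < k l} \<and>
       (\<forall>l j j'. l < m \<and> j < k l \<and> j' < k l \<and> cv l j = cv l j' \<longrightarrow> j = j') \<and>
       (\<forall>l l'. l < m \<and> l' < m \<and> l \<noteq> l' \<longrightarrow>
            (\<exists>!v. (\<exists>j<k l. cv l j = v) \<and> (\<exists>j'<k l'. cv l' j' = v))) \<and>
       (\<forall>v\<in>gV G. card {l. l < m \<and> (\<exists>j<k l. cv l j = v)} = 2) \<and>
       (\<forall>v\<in>gV G. \<exists>l l' j j' n e s w.
            l < m \<and> l' < m \<and> l \<noteq> l' \<and> j < k l \<and> j' < k l' \<and>
            cv l j = v \<and> cv l' j' = v \<and>
            ginc G v = [n, e, s, w] \<and>
            {n, s} = {seg l j, seg l (Suc j)} \<and> {e, w} = {seg l' j', seg l' (Suc j')}) \<and>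
       (\<forall>v\<in>gV G. gf G v = PASS) \<and>
       (\<forall>e\<in>gE G. \<forall>b. gw G e b = 1))"

end

theory Submission
  imports Defs
begin

text \<open>PASS is nonzero only when each line passes its value straight through the crossing,
  and then it contributes a sign -1 exactly when both crossing lines carry a 1. Hence
  an assignment has nonzero weight only if it is constant along every line, so the
  signature vanishes off the diagonal, and on the diagonal its weight is -1 to the number
  of crossings of two lines carrying 1, that is to hw x choose 2. The identity for O
  reduces to a 4-periodic identity for the coefficient of C, checked on 0, 1, 2, 3.\<close>

lemma PASS_nonzero_imp_pass_through: "PASS [a, b, c, d] \<noteq> 0 \<Longrightarrow> a = c \<and> b = d"
  by (cases a; cases b; cases c; cases d) (simp_all add: PASS_def)

lemma PASS_pass_through: "PASS [a, b, a, b] = (if a \<and> b then -1 else 1)"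
  by (cases a; cases b) (simp_all add: PASS_def)

lemma choose_two_add_four: "(h + 4) choose 2 = (h choose 2) + 2 * (2 * h + 3)"
  by (simp add: numeral_eq_Suc)

lemma cross_cap_coefficient:
  "(1 - \<i>) / 2 * \<i> ^ h + (1 + \<i>) / 2 * (- \<i>) ^ h = (-1::complex) ^ (h choose 2)"
proof (induction h rule: less_induct)
  case (less h)
  show ?case
  proof (cases "h < 4")
    case True
    then consider "h = 0" | "h = 1" | "h = 2" | "h = 3" by linarith
    then show ?thesis
      by cases (auto simp: field_simps eval_nat_numeral complex_eq_iff)
  next
    case False
    then obtain g where h: "h = g + 4"
      by (metis add.commute le_Suc_ex not_less)
    have "\<i> ^ h = \<i> ^ g" "(- \<i>) ^ h = (- \<i>) ^ g"
      by (simp_all add: h power_add eval_nat_numeral)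
    moreover have "(-1::complex) ^ (h choose 2) = (-1) ^ (g choose 2)"
      by (simp add: h choose_two_add_four power_add power_mult)
    ultimately show ?thesis
      using less[of g] h by (simp only:)
  qed
qed

lemma Ofun_cross_cap_decomposition:
  "Ofun x y = (1 - \<i>) / 2 * \<i> ^ hw x * Cfun x y + (1 + \<i>) / 2 * (- \<i>) ^ hw x * Cfun x y"
proof -
  have "(1 - \<i>) / 2 * \<i> ^ hw x * Cfun x y + (1 + \<i>) / 2 * (- \<i>) ^ hw x * Cfun x y
      = ((1 - \<i>) / 2 * \<i> ^ hw x + (1 + \<i>) / 2 * (- \<i>) ^ hw x) * Cfun x y"
    by (simp only: distrib_right)
  also have "\<dots> = (-1) ^ (hw x choose 2) * Cfun x y"
    by (simp only: cross_cap_coefficient)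
  also have "\<dots> = Ofun x y"
    by (simp add: Cfun_def Ofun_def flip: power_mult_distrib)
  finally show ?thesis ..
qed

lemma card_two_eq_doubleton: "card A = 2 \<Longrightarrow> a \<in> A \<Longrightarrow> b \<in> A \<Longrightarrow> a \<noteq> b \<Longrightarrow> A = {a, b}"
  by (auto simp: card_2_iff)

lemma all_less_two_mult: "(\<forall>i<2 * (m::nat). P i) \<longleftrightarrow> (\<forall>l<m. P l \<and> P (m + l))"
proof (intro iffI allI impI)
  fix i assume "\<forall>l<m. P l \<and> P (m + l)" "i < 2 * m"
  then show "P i"
    by (cases "i < m") (auto dest: spec[of _ "i - m"])
qed simp_all

locale crossing_lines =
  fixes G :: "('v, 'e) gate" and m :: nat and xe ye :: "nat \<Rightarrow> 'e"
    and seg :: "nat \<Rightarrow> nat \<Rightarrow> 'e" and k :: "nat \<Rightarrow> nat" and cv :: "nat \<Rightarrow> nat \<Rightarrow> 'v"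
  assumes finite_vertices: "finite (gV G)"
    and finite_edges: "finite (gE G)"
    and dangling_edges: "l < m \<Longrightarrow> xe l = seg l 0 \<and> ye l = seg l (k l)"
    and edges_eq: "gE G = {seg l j | l j. l < m \<and> j \<le> k l}"
    and seg_inj: "\<lbrakk>l < m; j \<le> k l; l' < m; j' \<le> k l'; seg l j = seg l' j'\<rbrakk> \<Longrightarrow> l = l' \<and> j = j'"
    and vertices_eq: "gV G = {cv l j | l j. l < m \<and> j < k l}"
    and cv_inj: "\<lbrakk>l < m; j < k l; j' < k l; cv l j = cv l j'\<rbrakk> \<Longrightarrow> j = j'"
    and unique_crossing: "\<lbrakk>l < m; l' < m; l \<noteq> l'\<rbrakk> \<Longrightarrow>
      \<exists>!v. (\<exists>j<k l. cv l j = v) \<and> (\<exists>j'<k l'. cv l' j' = v)"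
    and two_lines: "v \<in> gV G \<Longrightarrow> card {l. l < m \<and> (\<exists>j<k l. cv l j = v)} = 2"
    and vertex_layout: "v \<in> gV G \<Longrightarrow> \<exists>l l' j j' n e s w.
      l < m \<and> l' < m \<and> l \<noteq> l' \<and> j < k l \<and> j' < k l' \<and> cv l j = v \<and> cv l' j' = v \<and>
      ginc G v = [n, e, s, w] \<and> {n, s} = {seg l j, seg l (Suc j)} \<and> {e, w} = {seg l' j', seg l' (Suc j')}"
    and PASS_vertices: "v \<in> gV G \<Longrightarrow> gf G v = PASS"
    and unit_weights: "e \<in> gE G \<Longrightarrow> gw G e b = 1"

lemma crossing_gate_imp_crossing_lines:
  assumes "crossing_gate G m xe ye"
  obtains seg k cv where "crossing_lines G m xe ye seg k cv"
proof -
  from assms obtain seg k cv where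
    "finite (gV G)" "finite (gE G)"
    "\<forall>l<m. xe l = seg l 0 \<and> ye l = seg l (k l)"
    "gE G = {seg l j | l j. l < m \<and> j \<le> k l}"
    "\<forall>l j l' j'. l < m \<and> j \<le> k l \<and> l' < m \<and> j' \<le> k l' \<and> seg l j = seg l' j'
       \<longrightarrow> l = l' \<and> j = j'"
    "gV G = {cv l j | l j. l < m \<and> j < k l}"
    "\<forall>l j j'. l < m \<and> j < k l \<and> j' < k l \<and> cv l j = cv l j' \<longrightarrow> j = j'"
    "\<forall>l l'. l < m \<and> l' < m \<and> l \<noteq> l' \<longrightarrow>
       (\<exists>!v. (\<exists>j<k l. cv l j = v) \<and> (\<exists>j'<k l'. cv l' j' = v))"
    "\<forall>v\<in>gV G. card {l. l < m \<and> (\<exists>j<k l. cv l j = v)} = 2"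
    "\<forall>v\<in>gV G. \<exists>l l' j j' n e s w.
       l < m \<and> l' < m \<and> l \<noteq> l' \<and> j < k l \<and> j' < k l' \<and> cv l j = v \<and> cv l' j' = v \<and>
       ginc G v = [n, e, s, w] \<and> {n, s} = {seg l j, seg l (Suc j)} \<and> {e, w} = {seg l' j', seg l' (Suc j')}"
    "\<forall>v\<in>gV G. gf G v = PASS"
    "\<forall>e\<in>gE G. \<forall>b. gw G e b = 1"
    unfolding crossing_gate_def by (elim conjE exE) (rule that, assumption+)
  then have "crossing_lines G m xe ye seg k cv"
    by unfold_locales simp_all
  then show thesis
    by (rule that)
qed

context crossing_lines
begin

definition lines_at :: "'v \<Rightarrow> nat set" where
  "lines_at v = {l. l < m \<and> (\<exists>j<k l. cv l j = v)}"

lemma vertex_layout_lines_at: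
  assumes "v \<in> gV G"
  obtains l l' j j' n e s w where "l < m" "l' < m" "l \<noteq> l'" "j < k l" "j' < k l'"
    "lines_at v = {l, l'}" "cv l j = v" "cv l' j' = v" "ginc G v = [n, e, s, w]"
    "{n, s} = {seg l j, seg l (Suc j)}" "{e, w} = {seg l' j', seg l' (Suc j')}"
proof -
  obtain l l' j j' n e s w where layout: "l < m" "l' < m" "l \<noteq> l'" "j < k l" "j' < k l'"
    "cv l j = v" "cv l' j' = v" "ginc G v = [n, e, s, w]"
    "{n, s} = {seg l j, seg l (Suc j)}" "{e, w} = {seg l' j', seg l' (Suc j')}"
    using vertex_layout[OF assms] by blast
  have "{l, l'} \<subseteq> lines_at v"
    using layout by (auto simp: lines_at_def)
  moreover have "card (lines_at v) = 2"
    using two_lines[OF assms] by (simp add: lines_at_def)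
  ultimately have "lines_at v = {l, l'}"
    using layout(3) by (simp add: card_two_eq_doubleton)
  with layout show thesis
    using that by blast
qed

lemma PASS_nonzero_continues_line:
  assumes nonzero: "PASS (map z (ginc G (cv l j))) \<noteq> 0" and "l < m" "j < k l"
  shows "z (seg l (Suc j)) = z (seg l j)"
proof -
  have "cv l j \<in> gV G"
    using vertices_eq assms by blast
  then obtain l1 l1' j1 j1' n e s w where layout: "j1 < k l1" "j1' < k l1'"
    "lines_at (cv l j) = {l1, l1'}" "cv l1 j1 = cv l j" "cv l1' j1' = cv l j"
    "ginc G (cv l j) = [n, e, s, w]"
    "{n, s} = {seg l1 j1, seg l1 (Suc j1)}" "{e, w} = {seg l1' j1', seg l1' (Suc j1')}"
    by (rule vertex_layout_lines_at)
  have "z n = z s" "z e = z w"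
    using nonzero layout(6) PASS_nonzero_imp_pass_through by auto
  moreover have "l \<in> {l1, l1'}"
    using assms layout(3) by (auto simp: lines_at_def)
  then consider "l = l1" "j = j1" | "l = l1'" "j = j1'"
    using layout(1,2,4,5) cv_inj[OF \<open>l < m\<close> \<open>j < k l\<close>] by auto
  ultimately show ?thesis
    using layout(7,8) by cases (auto simp: doubleton_eq_iff)
qed

lemma nonzero_weight_imp_constant_on_line:
  assumes "(\<Prod>v\<in>gV G. PASS (map z (ginc G v))) \<noteq> 0" and "l < m" "j \<le> k l"
  shows "z (seg l j) = z (seg l 0)"
  using \<open>j \<le> k l\<close>
proof (induction j)
  case (Suc j)
  then have "j < k l"
    by simp
  then have "cv l j \<in> gV G"
    using vertices_eq \<open>l < m\<close> by blast
  with assms(1) have "PASS (map z (ginc G (cv l j))) \<noteq> 0"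
    using finite_vertices by (auto simp: prod_zero_iff)
  with Suc \<open>l < m\<close> \<open>j < k l\<close> show ?case
    by (simp add: PASS_nonzero_continues_line)
qed simp

definition line_assignment :: "bool list \<Rightarrow> 'e \<Rightarrow> bool" where
  "line_assignment x e \<longleftrightarrow> (\<exists>l<m. \<exists>j\<le>k l. e = seg l j \<and> x ! l)"

lemma line_assignment_seg: "l < m \<Longrightarrow> j \<le> k l \<Longrightarrow> line_assignment x (seg l j) = x ! l"
  unfolding line_assignment_def using seg_inj by blast

lemma line_assignment_outside: "e \<notin> gE G \<Longrightarrow> \<not> line_assignment x e"
  unfolding line_assignment_def edges_eq by blast

definition boundary_assignments :: "bool list \<Rightarrow> bool list \<Rightarrow> ('e \<Rightarrow> bool) set" where
  "boundary_assignments x y =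
     {z. (\<forall>l<m. z (seg l 0) = x ! l \<and> z (seg l (k l)) = y ! l) \<and> (\<forall>e. e \<notin> gE G \<longrightarrow> \<not> z e)}"

lemma Sig_eq_sum_PASS:
  assumes "length x = m" "length y = m"
  shows "Sig G (map xe [0..<m] @ map ye [0..<m]) (x @ y)
    = (\<Sum>z\<in>boundary_assignments x y. \<Prod>v\<in>gV G. PASS (map z (ginc G v)))"
proof -
  let ?ds = "map xe [0..<m] @ map ye [0..<m]"
  have "(\<forall>i<length ?ds. z (?ds ! i) = (x @ y) ! i)
      \<longleftrightarrow> (\<forall>l<m. z (seg l 0) = x ! l \<and> z (seg l (k l)) = y ! l)" for z
  proof -
    have "length ?ds = 2 * m"
      by simp
    then have "(\<forall>i<length ?ds. z (?ds ! i) = (x @ y) ! i)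
      \<longleftrightarrow> (\<forall>l<m. z (?ds ! l) = (x @ y) ! l \<and> z (?ds ! (m + l)) = (x @ y) ! (m + l))"
      by (simp only: all_less_two_mult)
    also have "\<dots> \<longleftrightarrow> (\<forall>l<m. z (seg l 0) = x ! l \<and> z (seg l (k l)) = y ! l)"
      using assms dangling_edges by (simp add: nth_append)
    finally show ?thesis .
  qed
  moreover have "(\<Prod>e\<in>gE G. gw G e (z e)) = 1"
    and "(\<Prod>v\<in>gV G. gf G v (map z (ginc G v))) = (\<Prod>v\<in>gV G. PASS (map z (ginc G v)))" for z
    by (simp_all add: unit_weights PASS_vertices)
  ultimately show ?thesis
    unfolding Sig_def boundary_assignments_def by simp
qed

lemma finite_boundary_assignments: "finite (boundary_assignments x y)"
proof (rule finite_subset)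
  show "boundary_assignments x y \<subseteq> (\<lambda>A e. e \<in> A) ` Pow (gE G)"
    unfolding boundary_assignments_def by (auto intro!: image_eqI[of _ _ "Collect _"])
qed (simp add: finite_edges)

lemma line_assignment_boundary:
  "length x = m \<Longrightarrow> line_assignment x \<in> boundary_assignments x x"
  by (simp add: boundary_assignments_def line_assignment_seg line_assignment_outside)

lemma nonzero_boundary_assignment:
  assumes "length x = m" "length y = m" and z: "z \<in> boundary_assignments x y"
    and nonzero: "(\<Prod>v\<in>gV G. PASS (map z (ginc G v))) \<noteq> 0"
  shows "y = x \<and> z = line_assignment x"
proof -
  have z_seg: "z (seg l j) = x ! l" if "l < m" "j \<le> k l" for l j
    using nonzero_weight_imp_constant_on_line[OF nonzero that] z that(1)
    by (simp add: boundary_assignments_def)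
  have "y = x"
    using z_seg[OF _ order_refl] z assms(1,2)
    by (auto simp: boundary_assignments_def intro: nth_equalityI)
  moreover have "z = line_assignment x"
  proof
    fix e
    show "z e = line_assignment x e"
      using z z_seg line_assignment_seg line_assignment_outside edges_eq
      by (cases "e \<in> gE G") (auto simp: boundary_assignments_def)
  qed
  ultimately show ?thesis ..
qed

lemma bij_betw_lines_at: "bij_betw lines_at (gV G) {P. P \<subseteq> {..<m} \<and> card P = 2}"
proof (rule bij_betwI')
  fix v w assume "v \<in> gV G" "w \<in> gV G"
  from \<open>v \<in> gV G\<close> obtain l l' where l: "l < m" "l' < m" "l \<noteq> l'" and v: "lines_at v = {l, l'}"
    by (rule vertex_layout_lines_at)
  show "lines_at v = lines_at w \<longleftrightarrow> v = w"
  proof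
    assume "lines_at v = lines_at w"
    with v have "{l, l'} \<subseteq> lines_at v" "{l, l'} \<subseteq> lines_at w"
      by auto
    then have "(\<exists>j<k l. cv l j = v) \<and> (\<exists>j'<k l'. cv l' j' = v)"
      and "(\<exists>j<k l. cv l j = w) \<and> (\<exists>j'<k l'. cv l' j' = w)"
      unfolding lines_at_def by blast+
    with unique_crossing[OF l] show "v = w"
      by blast
  qed simp
next
  fix v assume "v \<in> gV G"
  then show "lines_at v \<in> {P. P \<subseteq> {..<m} \<and> card P = 2}"
    using two_lines by (auto simp: lines_at_def)
next
  fix P assume "P \<in> {P. P \<subseteq> {..<m} \<and> card P = 2}"
  then obtain a b where P: "P = {a, b}" "a \<noteq> b" "a < m" "b < m"
    by (auto simp: card_2_iff)
  then obtain v where v: "(\<exists>j<k a. cv a j = v) \<and> (\<exists>j'<k b. cv b j' = v)"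
    using ex1_implies_ex[OF unique_crossing[OF \<open>a < m\<close> \<open>b < m\<close> \<open>a \<noteq> b\<close>]] by blast
  then have "v \<in> gV G"
    using vertices_eq \<open>a < m\<close> by blast
  moreover have "a \<in> lines_at v" "b \<in> lines_at v"
    using v P by (auto simp: lines_at_def)
  ultimately have "lines_at v = P"
    using two_lines P(1,2) by (simp add: card_two_eq_doubleton lines_at_def)
  with \<open>v \<in> gV G\<close> show "\<exists>v\<in>gV G. P = lines_at v"
    by blast
qed

lemma card_vertices_within:
  assumes "T \<subseteq> {..<m}"
  shows "card {v\<in>gV G. lines_at v \<subseteq> T} = card T choose 2"
proof -
  have "lines_at ` {v\<in>gV G. lines_at v \<subseteq> T} = {P \<in> lines_at ` gV G. P \<subseteq> T}"
    by blast
  also have "\<dots> = {P. P \<subseteq> T \<and> card P = 2}"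
    using bij_betw_imp_surj_on[OF bij_betw_lines_at] assms by auto
  finally have "bij_betw lines_at {v\<in>gV G. lines_at v \<subseteq> T} {P. P \<subseteq> T \<and> card P = 2}"
    by (rule bij_betw_subset[OF bij_betw_lines_at, rotated]) blast
  then have "card {v\<in>gV G. lines_at v \<subseteq> T} = card {P. P \<subseteq> T \<and> card P = 2}"
    by (rule bij_betw_same_card)
  also have "\<dots> = card T choose 2"
    using assms by (intro n_subsets) (auto intro: finite_subset)
  finally show ?thesis .
qed

lemma line_assignment_weight:
  assumes "length x = m"
  shows "(\<Prod>v\<in>gV G. PASS (map (line_assignment x) (ginc G v))) = (-1) ^ (hw x choose 2)"
proof -
  define T where "T = {l. l < m \<and> x ! l}"
  have PASS_at: "PASS (map (line_assignment x) (ginc G v)) = (if lines_at v \<subseteq> T then -1 else 1)"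
    if "v \<in> gV G" for v
  proof -
    obtain l l' j j' n e s w where layout: "l < m" "l' < m" "j < k l" "j' < k l'"
      "lines_at v = {l, l'}" "ginc G v = [n, e, s, w]"
      "{n, s} = {seg l j, seg l (Suc j)}" "{e, w} = {seg l' j', seg l' (Suc j')}"
      using \<open>v \<in> gV G\<close> by (rule vertex_layout_lines_at)
    then have "map (line_assignment x) (ginc G v) = [x ! l, x ! l', x ! l, x ! l']"
      by (auto simp: doubleton_eq_iff line_assignment_seg)
    with layout show ?thesis
      by (simp add: PASS_pass_through T_def)
  qed
  have "(\<Prod>v\<in>gV G. PASS (map (line_assignment x) (ginc G v)))
      = (\<Prod>v\<in>gV G. if lines_at v \<subseteq> T then -1 else 1)"
    by (rule prod.cong) (simp_all add: PASS_at)
  also have "\<dots> = (-1) ^ card {v\<in>gV G. lines_at v \<subseteq> T}"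
    using finite_vertices by (simp add: prod.If_cases Collect_conj_eq Int_commute)
  also have "card {v\<in>gV G. lines_at v \<subseteq> T} = hw x choose 2"
    using card_vertices_within[of T] assms
    by (simp add: T_def hw_def length_filter_conv_card subset_eq)
  finally show ?thesis .
qed

theorem Sig_eq_Cfun:
  assumes "length x = m" "length y = m"
  shows "Sig G (map xe [0..<m] @ map ye [0..<m]) (x @ y) = Cfun x y"
proof (cases "y = x")
  case True
  have "(\<Sum>z\<in>boundary_assignments x x. \<Prod>v\<in>gV G. PASS (map z (ginc G v)))
      = (\<Sum>z\<in>{line_assignment x}. \<Prod>v\<in>gV G. PASS (map z (ginc G v)))"
    using assms(1) nonzero_boundary_assignment[OF assms(1,1)]
    by (intro sum.mono_neutral_right) (auto simp: finite_boundary_assignments line_assignment_boundary)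
  then show ?thesis
    using assms True by (simp add: Sig_eq_sum_PASS line_assignment_weight Cfun_def)
next
  case False
  then have "(\<Sum>z\<in>boundary_assignments x y. \<Prod>v\<in>gV G. PASS (map z (ginc G v))) = 0"
    using nonzero_boundary_assignment[OF assms] by (intro sum.neutral) blast
  with False show ?thesis
    using assms by (simp add: Sig_eq_sum_PASS Cfun_def)
qed

end

theorem mainTheorem10:
  fixes G :: "('v, 'e) gate" and m :: nat and xe ye :: "nat \<Rightarrow> 'e"
  assumes "m \<ge> 1"
    and "crossing_gate G m xe ye"
  shows "\<forall>x y. length x = m \<longrightarrow> length y = m \<longrightarrow>
           Sig G (map xe [0..<m] @ map ye [0..<m]) (x @ y) = Cfun x y \<and>
           Ofun x y = (1 - \<i>) / 2 * \<i> ^ hw x * Cfun x y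
                    + (1 + \<i>) / 2 * (- \<i>) ^ hw x * Cfun x y"
proof -
  obtain seg k cv where "crossing_lines G m xe ye seg k cv"
    using assms(2) by (rule crossing_gate_imp_crossing_lines)
  then show ?thesis
    using crossing_lines.Sig_eq_Cfun Ofun_cross_cap_decomposition by blast
qed

end
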